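(* For all integers $i,N,n$ with $0\le i\le N\le n$, $$\sum_{i_1,i_2}\binom{n-i_2}{N-i_2}\binom{n-i_1}{i_2-i}\binom{N-i}{i_1-i}(-1)^{i_1+i_2}=(-1)^{N-i},$$ where the sum is over all integers $i_1,i_2$.
   Context: Convention: the binomial coefficient $\binom{k}{l}$ is defined as the usual binomial coefficient when $k\ge0$, $l\ge0$ and $k\ge l$, and is $0$ otherwise. Because of this convention, the sum above has only finitely many nonzero terms. *)

theory Defs
  imports Main "HOL-Library.Groups_Big_Fun"
begin

definition ibinom :: "int \<Rightarrow> int \<Rightarrow> int" where
  "ibinom k l = (if 0 \<le> l \<and> l \<le> k then int (nat k choose nat l) else 0)"

definition negone_pow :: "int \<Rightarrow> int" where
  "negone_pow m = (if even m then 1 else -1)"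

end

theory Submission
  imports Defs
begin

text \<open>After the shift \<open>i1 = i + a\<close>, \<open>i2 = i + b\<close>, \<open>M = N - i\<close>, \<open>m = n - i\<close>, the sum over \<open>a\<close> is
  the \<open>M\<close>-th backward difference of \<open>k \<mapsto> C(k, b)\<close> at \<open>m\<close>, which equals \<open>C(m - M, b - M)\<close>
  and in particular vanishes for \<open>b < M\<close>. Only \<open>b = M\<close> survives, contributing \<open>(-1)^M\<close>.\<close>

definition backward_diff :: "nat \<Rightarrow> (nat \<Rightarrow> 'a::comm_ring_1) \<Rightarrow> nat \<Rightarrow> 'a" where
  "backward_diff M f m = (\<Sum>a\<le>M. (-1)^a * of_nat (M choose a) * f (m - a))"

lemma backward_diff_0 [simp]: "backward_diff 0 f m = f m"
  by (simp add: backward_diff_def)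

lemma backward_diff_Suc:
  "backward_diff (Suc M) f m = backward_diff M f m - backward_diff M f (m - 1)"
proof -
  let ?t = "\<lambda>c a. (-1)^Suc a * of_nat c * f (m - Suc a)"
  have "backward_diff (Suc M) f m
          = f m + (\<Sum>a\<le>M. ?t (M choose Suc a) a) + (\<Sum>a\<le>M. ?t (M choose a) a)"
    unfolding backward_diff_def
    by (subst sum.atMost_Suc_shift) (simp add: sum.distrib[symmetric] ring_distribs algebra_simps)
  also have "f m + (\<Sum>a\<le>M. ?t (M choose Suc a) a) = backward_diff M f m"
  proof -
    have "backward_diff M f m = (\<Sum>a\<le>Suc M. (-1)^a * of_nat (M choose a) * f (m - a))"
      unfolding backward_diff_def by (simp add: binomial_eq_0)
    also have "\<dots> = f m + (\<Sum>a\<le>M. ?t (M choose Suc a) a)"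
      by (subst sum.atMost_Suc_shift) (simp del: sum.atMost_Suc)
    finally show ?thesis ..
  qed
  also have "(\<Sum>a\<le>M. ?t (M choose a) a) = - backward_diff M f (m - 1)"
    unfolding backward_diff_def sum_negf[symmetric] by (intro sum.cong) simp_all
  finally show ?thesis by simp
qed

lemma backward_diff_choose:
  assumes "M \<le> m"
  shows "backward_diff M (\<lambda>k. of_nat (k choose b)) m
           = (if M \<le> b then of_nat ((m - M) choose (b - M)) else 0)"
  using assms
proof (induction M arbitrary: m b)
  case 0
  then show ?case by simp
next
  case (Suc M)
  have shift: "m - M = Suc (m - Suc M)" "m - 1 - M = m - Suc M"
    using Suc.prems by simp_all
  show ?case
  proof (cases "Suc M \<le> b")
    case True
    then have "b - M = Suc (b - Suc M)" by simp
    with True show ?thesis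
      using Suc by (simp add: backward_diff_Suc shift)
  next
    case False
    then show ?thesis
      using Suc by (cases "b = M") (auto simp: backward_diff_Suc shift)
  qed
qed

lemma alternating_double_sum_choose:
  assumes "M \<le> m"
  shows "(\<Sum>a\<le>M. \<Sum>b\<le>M. of_nat ((m - b) choose (M - b)) * of_nat ((m - a) choose b)
            * of_nat (M choose a) * (-1)^(a + b)) = ((-1)^M :: 'a::comm_ring_1)"
proof -
  have "(\<Sum>a\<le>M. \<Sum>b\<le>M. of_nat ((m - b) choose (M - b)) * of_nat ((m - a) choose b)
            * of_nat (M choose a) * (-1)^(a + b))
      = (\<Sum>b\<le>M. of_nat ((m - b) choose (M - b)) * (-1)^b
            * backward_diff M (\<lambda>k. of_nat (k choose b)) m :: 'a)"
    unfolding backward_diff_def sum_distrib_left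
    by (subst sum.swap) (intro sum.cong refl, simp add: power_add algebra_simps)
  also have "\<dots> = (\<Sum>b\<le>M. if b = M then (-1)^M else 0)"
    by (intro sum.cong refl) (use assms in \<open>auto simp: backward_diff_choose\<close>)
  finally show ?thesis by simp
qed

lemma sum_int_interval_shift:
  "(\<Sum>x\<in>{i..i + int M}. f x) = (\<Sum>a\<le>M. f (i + int a))"
proof -
  have "x \<in> (\<lambda>a. i + int a) ` {..M}" if "x \<in> {i..i + int M}" for x
    using that by (intro image_eqI[of _ _ "nat (x - i)"]) auto
  then have "{i..i + int M} = (\<lambda>a. i + int a) ` {..M}"
    by auto
  then show ?thesis
    by (simp add: sum.reindex inj_on_def)
qed

lemma Sum_any_int_pairs_shift:
  fixes g :: "int \<times> int \<Rightarrow> 'a::comm_monoid_add"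
  assumes "\<And>x y. g (x, y) \<noteq> 0 \<Longrightarrow> x \<in> {i..i + int M} \<and> y \<in> {i..i + int M}"
  shows "Sum_any g = (\<Sum>a\<le>M. \<Sum>b\<le>M. g (i + int a, i + int b))"
proof -
  have "Sum_any g = sum g ({i..i + int M} \<times> {i..i + int M})"
    using assms by (intro Sum_any.expand_superset) auto
  also have "\<dots> = (\<Sum>x\<in>{i..i + int M}. \<Sum>y\<in>{i..i + int M}. g (x, y))"
    by (simp add: sum.cartesian_product)
  finally show ?thesis
    by (simp add: sum_int_interval_shift)
qed

lemma ibinom_of_nat: "ibinom (int p) (int q) = int (p choose q)"
  unfolding ibinom_def by (auto simp: binomial_eq_0)

lemma ibinom_nonzeroD: "ibinom k l \<noteq> 0 \<Longrightarrow> 0 \<le> l \<and> l \<le> k"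
  unfolding ibinom_def by (auto split: if_splits)

lemma negone_pow_of_nat: "negone_pow (int k) = (-1)^k"
  unfolding negone_pow_def by simp

lemma negone_pow_shift: "negone_pow (i + int a + (i + int b)) = (-1)^(a + b)"
  unfolding negone_pow_def by simp

theorem mainTheorem2:
  fixes i N n :: int
  assumes "0 \<le> i" and "i \<le> N" and "N \<le> n"
  shows "Sum_any (\<lambda>(i1::int, i2::int).
            ibinom (n - i2) (N - i2) * ibinom (n - i1) (i2 - i) * ibinom (N - i) (i1 - i)
            * negone_pow (i1 + i2))
         = negone_pow (N - i)"
proof -
  define M where "M = nat (N - i)"
  define m where "m = nat (n - i)"
  have N: "N = i + int M" and n: "n = i + int m" and "M \<le> m"
    using assms by (auto simp: M_def m_def)
  define g where "g = (\<lambda>(i1::int, i2::int).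
    ibinom (n - i2) (N - i2) * ibinom (n - i1) (i2 - i) * ibinom (N - i) (i1 - i)
    * negone_pow (i1 + i2))"
  have "Sum_any g = (\<Sum>a\<le>M. \<Sum>b\<le>M. g (i + int a, i + int b))"
    by (rule Sum_any_int_pairs_shift) (auto simp: g_def N dest!: ibinom_nonzeroD)
  also have "\<dots> = (\<Sum>a\<le>M. \<Sum>b\<le>M. int ((m - b) choose (M - b)) * int ((m - a) choose b)
            * int (M choose a) * (-1)^(a + b))"
    using \<open>M \<le> m\<close>
    unfolding g_def case_prod_conv negone_pow_shift
    by (intro sum.cong refl) (simp add: N n flip: ibinom_of_nat of_nat_diff)
  also have "\<dots> = (-1)^M"
    using \<open>M \<le> m\<close> by (rule alternating_double_sum_choose)
  also have "\<dots> = negone_pow (N - i)"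
    by (simp add: N negone_pow_of_nat)
  finally show ?thesis
    unfolding g_def .
qed

end
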